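(* Let $p$ be an odd prime, $m\ge1$, $Q=T_{(p^m)}$ and $K=K_Q(p)$, and let $\phi=\phi_1$ be the map on $K$ defined below. If $S_\xi,S_{\xi'}\in Q$ satisfy $S_\xi^p\in Z(K)$ and $S_{\xi'}^p\in Z(K)$, then $\phi(S_\xi S_{\xi'})=\phi(S_\xi)\phi(S_{\xi'})$.
   Context: Let $\omega=e^{2\pi i/p}$, $\{|q\rangle:q\in\mathbb{Z}_p\}$ the computational basis of $\mathbb{C}^p$, $X|q\rangle=|q+1\rangle$. For $\xi:\mathbb{Z}_p\to U(1)$ let $S_\xi=\mathrm{diag}(\xi(0),\dots,\xi(p-1))$. $T=\{S_\xi:\prod_{q}\xi(q)=1\}$, $T_{(p^k)}=\{S\in T:S^{p^k}=\mathbbm{1}\}$. $K_Q(p)$ is the subgroup of $SU(p)$ generated by all $S_\xi X^b$, $S_\xi\in Q$, $b\in\mathbb{Z}_p$; each element is uniquely $S_\xi X^b$, written $(\xi,b)$. $Z(K)$ is the center of $K$. Every $S_\xi\in T_{(p^m)}$ has a unique expansion $\xi(q)=\exp\big(\sum_{j=1}^m\frac{2\pi i}{p^j}\sum_{a=0}^{p-1}\vartheta_{j,a}q^a\big)$ with $\vartheta_{j,a}\in\{0,\dots,p-1\}$ (set $\vartheta_{2,0}=0$ if $m=1$). Define $R(\xi)$ and $P(\xi)$ as the functions $R(\xi)(q)=\omega^{\vartheta_{1,0}+\vartheta_{1,1}q}e^{2\pi i\vartheta_{2,0}/p^2}$ and $P(\xi)(q)=\omega^{\vartheta_{1,0}+\vartheta_{1,1}q}$.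 Define $\phi_1:K\to U(p)$ by $\phi_1(S_\xi)=S_{R(\xi)}$, $\phi_1(S_\xi X)=S_{P(\xi)}X$, and for $2\le b\le p-1$, $\phi_1(M)=\phi_1(M^{y})^{b}$ where $M=S_\xi X^b$ and $y\in\{1,\dots,p-1\}$ with $yb\equiv1\bmod p$ (so $M^y$ has $X$-exponent $1$). *)

theory Defs
  imports Complex_Main "Jordan_Normal_Form.Matrix"
begin

text \<open>Operators on C^p are p x p complex matrices (JNF); the computational basis
  |q>, q in Z_p, is indexed by q in {0..<p}; functions xi : Z_p -> U(1) are
  represented by functions nat => complex, only their values on {0..<p} matter.\<close>

definition omega :: "nat \<Rightarrow> complex" where
  "omega p = exp (2 * pi * \<i> / of_nat p)"

definition Xm :: "nat \<Rightarrow> complex mat" where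
  "Xm p = mat p p (\<lambda>(r, q). if r = (q + 1) mod p then 1 else 0)"

definition Sm :: "nat \<Rightarrow> (nat \<Rightarrow> complex) \<Rightarrow> complex mat" where
  "Sm p \<xi> = mat p p (\<lambda>(r, q). if r = q then \<xi> r else 0)"

definition Tset :: "nat \<Rightarrow> complex mat set" where
  "Tset p = {Sm p \<xi> | \<xi>. (\<forall>q<p. norm (\<xi> q) = 1) \<and> (\<Prod>q<p. \<xi> q) = 1}"

definition Tpow :: "nat \<Rightarrow> nat \<Rightarrow> complex mat set" where
  "Tpow p k = {S \<in> Tset p. S ^\<^sub>m (p ^ k) = 1\<^sub>m p}"

inductive_set Kgrp :: "nat \<Rightarrow> complex mat set \<Rightarrow> complex mat set" for p Q where
  gen: "S \<in> Q \<Longrightarrow> b < p \<Longrightarrow> S * (Xm p ^\<^sub>m b) \<in> Kgrp p Q"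
| mult: "A \<in> Kgrp p Q \<Longrightarrow> B \<in> Kgrp p Q \<Longrightarrow> A * B \<in> Kgrp p Q"
| inv: "A \<in> Kgrp p Q \<Longrightarrow> B \<in> carrier_mat p p \<Longrightarrow> A * B = 1\<^sub>m p \<Longrightarrow> B \<in> Kgrp p Q"

definition center :: "complex mat set \<Rightarrow> complex mat set" where
  "center K = {A \<in> K. \<forall>B \<in> K. A * B = B * A}"

text \<open>The (unique) coefficients theta_{j,a} (j in {1..m}, a in {0..p-1}) of the expansion
  xi(q) = exp(sum_{j=1}^m 2 pi i / p^j sum_{a=0}^{p-1} theta_{j,a} q^a) for q in {0..<p}
  (q^a computed with the representative q in {0..p-1}, 0^0 = 1).
  theta is 0 outside the index range, so theta_{2,0} = 0 when m = 1.\<close>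
definition theta :: "nat \<Rightarrow> nat \<Rightarrow> (nat \<Rightarrow> complex) \<Rightarrow> nat \<Rightarrow> nat \<Rightarrow> nat" where
  "theta p m \<xi> = (THE \<theta>.
     (\<forall>j a. \<theta> j a < p) \<and>
     (\<forall>j a. (j \<notin> {1..m} \<or> a \<ge> p) \<longrightarrow> \<theta> j a = 0) \<and>
     (\<forall>q<p. \<xi> q = exp (\<Sum>j\<in>{1..m}. (2 * pi * \<i> / of_nat (p ^ j)) *
                            (\<Sum>a<p. of_nat (\<theta> j a) * of_nat (q ^ a)))))"

definition Rfun :: "nat \<Rightarrow> nat \<Rightarrow> (nat \<Rightarrow> complex) \<Rightarrow> nat \<Rightarrow> complex" where
  "Rfun p m \<xi> = (\<lambda>q. omega p ^ (theta p m \<xi> 1 0 + theta p m \<xi> 1 1 * q) *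
                      exp (2 * pi * \<i> * of_nat (theta p m \<xi> 2 0) / of_nat (p ^ 2)))"

definition Pfun :: "nat \<Rightarrow> nat \<Rightarrow> (nat \<Rightarrow> complex) \<Rightarrow> nat \<Rightarrow> complex" where
  "Pfun p m \<xi> = (\<lambda>q. omega p ^ (theta p m \<xi> 1 0 + theta p m \<xi> 1 1 * q))"

definition xexp :: "nat \<Rightarrow> complex mat \<Rightarrow> nat" where
  "xexp p M = (THE b. b < p \<and> (\<exists>\<xi>. M = Sm p \<xi> * (Xm p ^\<^sub>m b)))"

definition dpart :: "nat \<Rightarrow> complex mat \<Rightarrow> nat \<Rightarrow> complex" where
  "dpart p M = (SOME \<xi>. M = Sm p \<xi> * (Xm p ^\<^sub>m xexp p M))"

definition phi1 :: "nat \<Rightarrow> nat \<Rightarrow> complex mat \<Rightarrow> complex mat" where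
  "phi1 p m M =
    (let b = xexp p M in
     if b = 0 then Sm p (Rfun p m (dpart p M))
     else if b = 1 then Sm p (Pfun p m (dpart p M)) * Xm p
     else (let y = (THE y. y \<in> {1..p-1} \<and> (y * b) mod p = 1);
               N = M ^\<^sub>m y
           in (Sm p (Pfun p m (dpart p N)) * Xm p) ^\<^sub>m b))"

end

(*
  Since S_xi^p commutes with X in K, xi^p is constant.  Together with xi^(p^m) = 1 and
  prod xi = 1 this forces xi q = omega^(f q) * exp (2 pi i t / p^2) for a polynomial f of
  degree < p (Lagrange interpolation mod p) and an integer t, with t = 0 if m = 1.  Reducing
  the coefficients of f mod p, after carrying t div p into the constant term, gives exactly
  the digits theta_{1,a} and theta_{2,0} of xi, all other digits vanish; the expansion is
  unique because a polynomial of degree < p vanishing on Z_p mod p has all its coefficients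
  divisible by p.  R(xi) only reads f_0, f_1 and t, and the carry does not change
  omega^(f_0 + f_1 q) * exp (2 pi i t / p^2), so R, and with it phi_1 on diagonal
  matrices, is multiplicative.
*)

theory Submission
  imports Defs "HOL-Analysis.Complex_Transcendental" "HOL-Computational_Algebra.Polynomial"
begin

lemma Sm_carrier [simp]: "Sm p \<xi> \<in> carrier_mat p p"
  by (simp add: Sm_def)

lemma Sm_dim [simp]: "dim_row (Sm p \<xi>) = p" "dim_col (Sm p \<xi>) = p"
  by (simp_all add: Sm_def)

lemma Sm_index [simp]: "i < p \<Longrightarrow> j < p \<Longrightarrow> Sm p \<xi> $$ (i, j) = (if i = j then \<xi> i else 0)"
  by (simp add: Sm_def)

lemma Xm_carrier [simp]: "Xm p \<in> carrier_mat p p"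
  by (simp add: Xm_def)

lemma Xm_dim [simp]: "dim_row (Xm p) = p" "dim_col (Xm p) = p"
  by (simp_all add: Xm_def)

lemma Xm_index [simp]: "i < p \<Longrightarrow> j < p \<Longrightarrow> Xm p $$ (i, j) = (if i = (j + 1) mod p then 1 else 0)"
  by (simp add: Xm_def)

lemma Xm_pow_carrier [simp]: "Xm p ^\<^sub>m b \<in> carrier_mat p p"
  by (induction b) auto

lemma Sm_mult_index:
  assumes "B \<in> carrier_mat p p" and "i < p" and "j < p"
  shows "(Sm p \<xi> * B) $$ (i, j) = \<xi> i * B $$ (i, j)"
proof -
  have "(Sm p \<xi> * B) $$ (i, j) = (\<Sum>k = 0..<p. Sm p \<xi> $$ (i, k) * B $$ (k, j))"
    using assms by (simp add: scalar_prod_def)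
  also have "\<dots> = (\<Sum>k = 0..<p. if k = i then \<xi> i * B $$ (i, j) else 0)"
    using assms by (intro sum.cong) auto
  finally show ?thesis
    using assms by simp
qed

lemma mult_Sm_index:
  assumes "B \<in> carrier_mat p p" and "i < p" and "j < p"
  shows "(B * Sm p \<xi>) $$ (i, j) = B $$ (i, j) * \<xi> j"
proof -
  have "(B * Sm p \<xi>) $$ (i, j) = (\<Sum>k = 0..<p. B $$ (i, k) * Sm p \<xi> $$ (k, j))"
    using assms by (simp add: scalar_prod_def)
  also have "\<dots> = (\<Sum>k = 0..<p. if k = j then B $$ (i, j) * \<xi> j else 0)"
    using assms by (intro sum.cong) auto
  finally show ?thesis
    using assms by simp
qed

lemma Sm_mult: "Sm p \<xi> * Sm p \<eta> = Sm p (\<lambda>q. \<xi> q * \<eta> q)"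
  by (rule eq_matI) (auto simp: Sm_mult_index simp del: index_mult_mat(1))

lemma Sm_pow: "Sm p \<xi> ^\<^sub>m k = Sm p (\<lambda>q. \<xi> q ^ k)"
proof (induction k)
  case 0
  show ?case
    by (rule eq_matI) auto
qed (simp add: Sm_mult mult.commute)

lemma Sm_eq_iff: "Sm p \<xi> = Sm p \<eta> \<longleftrightarrow> (\<forall>q<p. \<xi> q = \<eta> q)"
proof
  assume "Sm p \<xi> = Sm p \<eta>"
  then show "\<forall>q<p. \<xi> q = \<eta> q"
    by (metis Sm_index)
qed auto

lemma Sm_eq_one_iff: "Sm p \<xi> = 1\<^sub>m p \<longleftrightarrow> (\<forall>q<p. \<xi> q = 1)"
proof
  assume "Sm p \<xi> = 1\<^sub>m p"
  then show "\<forall>q<p. \<xi> q = 1"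
    by (metis Sm_index index_one_mat(1))
qed auto

lemma Xm_pow_index:
  "i < p \<Longrightarrow> j < p \<Longrightarrow> (Xm p ^\<^sub>m b) $$ (i, j) = (if i = (j + b) mod p then 1 else 0)"
proof (induction b arbitrary: j)
  case (Suc b)
  have "(Xm p ^\<^sub>m Suc b) $$ (i, j) = (\<Sum>k = 0..<p. (Xm p ^\<^sub>m b) $$ (i, k) * Xm p $$ (k, j))"
    using Suc.prems by (simp add: scalar_prod_def)
  also have "\<dots> = (\<Sum>k = 0..<p. if k = (j + 1) mod p then (if i = (k + b) mod p then 1 else 0) else 0)"
    using Suc by (intro sum.cong) auto
  also have "\<dots> = (if i = (j + Suc b) mod p then 1 else 0)"
    using Suc.prems by (simp add: mod_add_left_eq)
  finally show ?case .
qed simp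

lemma Sm_commute_Xm_imp_const:
  assumes "Sm p \<eta> * Xm p = Xm p * Sm p \<eta>" and "q < p"
  shows "\<eta> q = \<eta> 0"
  using \<open>q < p\<close>
proof (induction q)
  case (Suc q)
  have "(Sm p \<eta> * Xm p) $$ (Suc q mod p, q) = (Xm p * Sm p \<eta>) $$ (Suc q mod p, q)"
    using assms(1) by simp
  then have "\<eta> (Suc q) = \<eta> q"
    using Suc.prems by (simp add: Sm_mult_index mult_Sm_index del: index_mult_mat(1))
  with Suc show ?case
    by simp
qed simp

lemma xexp_Sm:
  assumes "p > 0" and "\<eta> 0 \<noteq> 0"
  shows "xexp p (Sm p \<eta>) = 0"
  unfolding xexp_def
proof (rule the_equality)
  show "0 < p \<and> (\<exists>\<xi>. Sm p \<eta> = Sm p \<xi> * Xm p ^\<^sub>m 0)"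
    using assms by auto
next
  fix b
  assume "b < p \<and> (\<exists>\<xi>. Sm p \<eta> = Sm p \<xi> * Xm p ^\<^sub>m b)"
  then obtain \<xi> where "b < p" and "Sm p \<eta> = Sm p \<xi> * Xm p ^\<^sub>m b"
    by blast
  then have "\<eta> 0 = (Sm p \<xi> * Xm p ^\<^sub>m b) $$ (0, 0)"
    using assms(1) by (metis Sm_index)
  also have "\<dots> = \<xi> 0 * (if 0 = b then 1 else 0)"
    using assms(1) \<open>b < p\<close> by (simp add: Sm_mult_index Xm_pow_index del: index_mult_mat(1))
  finally have "\<eta> 0 = \<xi> 0 * (if 0 = b then 1 else 0)" .
  with assms(2) show "b = 0"
    by (cases "b = 0") auto
qed

lemma theta_cong: "(\<And>q. q < p \<Longrightarrow> \<xi> q = \<eta> q) \<Longrightarrow> theta p m \<xi> = theta p m \<eta>"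
  unfolding theta_def by simp

lemma phi1_Sm:
  assumes "p > 0" and "\<eta> 0 \<noteq> 0"
  shows "phi1 p m (Sm p \<eta>) = Sm p (Rfun p m \<eta>)"
proof -
  have xexp: "xexp p (Sm p \<eta>) = 0"
    using assms by (rule xexp_Sm)
  have "Sm p \<eta> = Sm p (dpart p (Sm p \<eta>)) * Xm p ^\<^sub>m xexp p (Sm p \<eta>)"
    unfolding dpart_def by (rule someI[where x = \<eta>]) (simp add: xexp)
  then have "theta p m (dpart p (Sm p \<eta>)) = theta p m \<eta>"
    using xexp by (auto simp: Sm_eq_iff intro: theta_cong)
  then show ?thesis
    using xexp by (simp add: phi1_def Rfun_def)
qed

lemma one_in_Tpow: "1\<^sub>m p \<in> Tpow p k"
proof -
  have "Sm p (\<lambda>_. 1) = 1\<^sub>m p"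
    by (simp add: Sm_eq_one_iff)
  moreover have "Sm p (\<lambda>_. 1) \<in> Tpow p k"
    unfolding Tpow_def Tset_def by (auto simp: Sm_pow Sm_eq_one_iff)
  ultimately show ?thesis
    by simp
qed

lemma Xm_in_Kgrp:
  assumes "1\<^sub>m p \<in> Q" and "1 < p"
  shows "Xm p \<in> Kgrp p Q"
  using Kgrp.gen[OF assms] by simp

lemma Tpow_SmD:
  assumes "Sm p \<xi> \<in> Tpow p k"
  shows "\<forall>q<p. \<xi> q ^ p ^ k = 1" and "(\<Prod>q<p. \<xi> q) = 1"
proof -
  from assms obtain \<zeta> where eq: "Sm p \<xi> = Sm p \<zeta>" and prod: "(\<Prod>q<p. \<zeta> q) = 1"
    and pow: "Sm p \<xi> ^\<^sub>m p ^ k = 1\<^sub>m p"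
    unfolding Tpow_def Tset_def by auto
  show "\<forall>q<p. \<xi> q ^ p ^ k = 1"
    using pow by (simp add: Sm_pow Sm_eq_one_iff)
  show "(\<Prod>q<p. \<xi> q) = 1"
    using eq prod by (simp add: Sm_eq_iff)
qed

lemma center_Sm_pow_const:
  assumes "1 < p" and "Sm p \<xi> ^\<^sub>m p \<in> center (Kgrp p (Tpow p k))"
  shows "\<forall>q<p. \<xi> q ^ p = \<xi> 0 ^ p"
proof -
  have "Xm p \<in> Kgrp p (Tpow p k)"
    using one_in_Tpow assms(1) by (rule Xm_in_Kgrp)
  with assms(2) have "Sm p (\<lambda>q. \<xi> q ^ p) * Xm p = Xm p * Sm p (\<lambda>q. \<xi> q ^ p)"
    unfolding center_def by (simp add: Sm_pow)
  then show ?thesis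
    using Sm_commute_Xm_imp_const[of p "\<lambda>q. \<xi> q ^ p"] by blast
qed

definition e2pi :: "real \<Rightarrow> complex" where
  "e2pi x = exp (2 * pi * \<i> * of_real x)"

lemma e2pi_add: "e2pi (x + y) = e2pi x * e2pi y"
  by (simp add: e2pi_def distrib_left exp_add)

lemma e2pi_of_int: "e2pi (of_int n) = 1"
  using exp_integer_2pi[of "of_int n"] by (simp add: e2pi_def mult_ac)

lemma e2pi_eq_iff: "e2pi x = e2pi y \<longleftrightarrow> (\<exists>n::int. x = y + of_int n)"
proof
  assume "e2pi x = e2pi y"
  then obtain n :: int where
    "2 * pi * \<i> * of_real x = 2 * pi * \<i> * of_real y + of_int (2 * n) * pi * \<i>"
    unfolding e2pi_def exp_eq by blast
  then have "(2 * pi * \<i>) * of_real x = (2 * pi * \<i>) * of_real (y + of_int n)"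
    by (simp add: algebra_simps)
  then show "\<exists>n::int. x = y + of_int n"
    by (metis mult_cancel_left of_real_eq_iff pi_neq_zero complex_i_not_zero
        mult_eq_0_iff of_real_eq_0_iff zero_neq_numeral)
qed (auto simp: e2pi_add e2pi_of_int)

lemma e2pi_power: "e2pi x ^ k = e2pi (of_nat k * x)"
  by (simp add: e2pi_def exp_of_nat_mult[symmetric] mult_ac)

lemma prod_e2pi: "(\<Prod>q\<in>A. e2pi (f q)) = e2pi (\<Sum>q\<in>A. f q)"
  by (induction A rule: infinite_finite_induct) (auto simp: e2pi_add e2pi_def[of 0])

lemma e2pi_frac_eq_iff:
  assumes "k > 0"
  shows "e2pi (of_int a / of_int k) = e2pi (of_int b / of_int k) \<longleftrightarrow> k dvd a - b"
proof -
  have "(of_int a / of_int k = (of_int b / of_int k :: real) + of_int n) \<longleftrightarrow> a = b + k * n"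
    for n :: int
  proof -
    have "(of_int a / of_int k = (of_int b / of_int k :: real) + of_int n)
        \<longleftrightarrow> (of_int a :: real) = of_int (b + k * n)"
      using assms by (simp add: field_simps)
    then show ?thesis
      by (simp only: of_int_eq_iff)
  qed
  then show ?thesis
    by (auto simp: e2pi_eq_iff dvd_def algebra_simps)
qed

lemma root_of_unity_e2pi:
  assumes "n > 0" and "z ^ n = 1"
  shows "\<exists>j::nat. z = e2pi (of_nat j / of_nat n)"
  using complex_roots_unity[of n] assms by (auto simp: e2pi_def)

lemma omega_eq_e2pi: "omega p = e2pi (1 / real p)"
  by (simp add: omega_def e2pi_def)

section \<open>Polynomials modulo a prime\<close>

definition polyval :: "nat \<Rightarrow> (nat \<Rightarrow> int) \<Rightarrow> int \<Rightarrow> int" where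
  "polyval n c x = (\<Sum>a<n. c a * x ^ a)"

lemma polyval_add: "polyval n (\<lambda>a. c a + c' a) x = polyval n c x + polyval n c' x"
  by (simp add: polyval_def sum.distrib distrib_right)

lemma polyval_diff: "polyval n (\<lambda>a. c a - c' a) x = polyval n c x - polyval n c' x"
  by (simp add: polyval_def sum_subtractf left_diff_distrib)

lemma dvd_coeff_if_dvd_synthetic_div:
  fixes P :: "'a::comm_ring_1 poly"
  assumes "\<And>j. d dvd coeff (synthetic_div P r) j" and "d dvd poly P r"
  shows "d dvd coeff P i"
proof -
  have "coeff P i = coeff ([:- r, 1:] * synthetic_div P r + [:poly P r:]) i"
    by (simp only: synthetic_div_correct')
  also have "\<dots> = - r * coeff (synthetic_div P r) i
      + (case i of 0 \<Rightarrow> poly P r | Suc j \<Rightarrow> coeff (synthetic_div P r) j)"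
    by (simp add: coeff_pCons split: nat.split)
  finally show ?thesis
    using assms by (simp split: nat.split)
qed

lemma prime_dvd_poly_synthetic_div:
  fixes P :: "int poly" and p :: int
  assumes "prime p" and "p dvd poly P r" and "p dvd poly P s" and "\<not> p dvd s - r"
  shows "p dvd poly (synthetic_div P r) s"
proof -
  have "poly P s = poly ([:- r, 1:] * synthetic_div P r + [:poly P r:]) s"
    by (simp only: synthetic_div_correct')
  then have "poly P s = (s - r) * poly (synthetic_div P r) s + poly P r"
    by (simp add: algebra_simps)
  then have "p dvd (s - r) * poly (synthetic_div P r) s"
    using assms(2,3) by (metis dvd_add_left_iff)
  then show ?thesis
    using assms(1,4) prime_dvd_mult_iff by blast
qed

lemma prime_dvd_coeff_if_roots_mod:
  fixes P :: "int poly" and p :: int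
  assumes "prime p" and "finite S" and "inj_on (\<lambda>r. r mod p) S"
    and "degree P < card S" and "\<forall>r\<in>S. p dvd poly P r"
  shows "p dvd coeff P i"
  using assms(2-)
proof (induction S arbitrary: P i rule: finite_induct)
  case (insert r F)
  show ?case
  proof (cases "F = {}")
    case True
    then have "P = [:coeff P 0:]"
      using insert.prems(2) by (simp add: degree_0_id)
    then show ?thesis
      using insert.prems(3) by (cases i) (metis insertI1 poly_pCons
          mult_zero_right poly_0 add.right_neutral, metis coeff_pCons_Suc coeff_0 dvd_0_right)
  next
    case False
    then have "card F > 0"
      using insert.hyps(1) by (simp add: card_gt_0_iff)
    then have "degree (synthetic_div P r) < card F"
      using insert.prems(2) insert.hyps by (simp add: degree_synthetic_div)
    moreover have "p dvd poly (synthetic_div P r) s" if "s \<in> F" for s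
    proof (rule prime_dvd_poly_synthetic_div)
      have "r mod p \<notin> (\<lambda>r. r mod p) ` F"
        using insert.prems(1) insert.hyps(2) by (metis Diff_empty Diff_insert0 inj_on_insert)
      then have "s mod p \<noteq> r mod p"
        using that by (metis image_eqI)
      then show "\<not> p dvd s - r"
        by (simp add: mod_eq_dvd_iff)
    qed (use assms(1) insert.prems(3) that in auto)
    ultimately have "p dvd coeff (synthetic_div P r) j" for j
      using insert.IH insert.prems(1) by simp
    then show ?thesis
      by (rule dvd_coeff_if_dvd_synthetic_div) (use insert.prems(3) in simp)
  qed
qed simp

lemma prime_dvd_coeff_if_polyval_vanishes:
  assumes "prime p" and "\<forall>q<p. int p dvd polyval p c (int q)" and "a < p"
  shows "int p dvd c a"
proof -
  define P where "P = (\<Sum>b<p. monom (c b) b)"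
  have poly_P: "poly P x = polyval p c x" for x
    by (simp add: P_def polyval_def poly_sum poly_monom)
  have coeff_P: "coeff P i = (if i < p then c i else 0)" for i
    by (simp add: P_def coeff_sum coeff_monom)
  have "degree P < p"
    using prime_gt_0_nat[OF assms(1)] by (intro degree_lessI) (auto simp: coeff_P)
  moreover have "inj_on (\<lambda>r. r mod int p) (int ` {..<p})"
    by (rule inj_onI) auto
  moreover have "card (int ` {..<p}) = p"
    by (simp add: card_image)
  moreover have "\<forall>r\<in>int ` {..<p}. int p dvd poly P r"
    using assms(2) by (simp add: poly_P)
  ultimately have "int p dvd coeff P a"
    using assms(1) prime_dvd_coeff_if_roots_mod[of "int p" "int ` {..<p}" P a] by simp
  then show ?thesis
    using assms(3) by (simp add: coeff_P)
qed

lemma inj_on_polyval_residues: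
  assumes "prime p"
  shows "inj_on (\<lambda>c. restrict (\<lambda>q. polyval p c (int q) mod int p) {..<p})
    (PiE {..<p} (\<lambda>_. {0..<int p}))"
proof (rule inj_onI)
  fix c c'
  assume c: "c \<in> PiE {..<p} (\<lambda>_. {0..<int p})" and c': "c' \<in> PiE {..<p} (\<lambda>_. {0..<int p})"
    and eq: "restrict (\<lambda>q. polyval p c (int q) mod int p) {..<p} =
      restrict (\<lambda>q. polyval p c' (int q) mod int p) {..<p}"
  have "int p dvd polyval p (\<lambda>a. c a - c' a) (int q)" if "q < p" for q
  proof -
    have "polyval p c (int q) mod int p = polyval p c' (int q) mod int p"
      using fun_cong[OF eq, of q] that by simp
    then show ?thesis
      by (simp add: polyval_diff mod_eq_dvd_iff)
  qed
  then have "int p dvd c a - c' a" if "a < p" for a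
    using prime_dvd_coeff_if_polyval_vanishes[OF assms, of "\<lambda>a. c a - c' a"] that by simp
  moreover have "c a \<in> {0..<int p}" "c' a \<in> {0..<int p}" if "a < p" for a
    using c c' that by (simp_all add: PiE_iff)
  ultimately have "c a = c' a" if "a < p" for a
    using that by (metis atLeastLessThan_iff mod_eq_dvd_iff mod_pos_pos_trivial)
  with c c' show "c = c'"
    by (metis PiE_ext lessThan_iff)
qed

lemma polyval_interpolation:
  fixes f :: "nat \<Rightarrow> int"
  assumes "prime p"
  shows "\<exists>c. \<forall>q<p. polyval p c (int q) mod int p = f q mod int p"
proof -
  have p_pos: "int p > 0"
    using assms prime_gt_0_nat by simp
  define A where "A = (PiE {..<p} (\<lambda>_. {0..<int p}) :: (nat \<Rightarrow> int) set)"
  define F where "F = (\<lambda>c. restrict (\<lambda>q. polyval p c (int q) mod int p) {..<p})"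
  have "F ` A \<subseteq> A"
    using p_pos unfolding A_def F_def by (intro image_subsetI) simp
  moreover have "inj_on F A"
    using inj_on_polyval_residues[OF assms] by (simp add: A_def F_def)
  moreover have "finite A"
    by (simp add: A_def finite_PiE)
  ultimately have "F ` A = A"
    by (intro card_subset_eq) (auto simp: card_image)
  moreover have "restrict (\<lambda>q. f q mod int p) {..<p} \<in> A"
    using p_pos unfolding A_def by (simp add: PiE_iff)
  ultimately obtain c where F_c: "F c = restrict (\<lambda>q. f q mod int p) {..<p}"
    by (metis imageE)
  have "polyval p c (int q) mod int p = f q mod int p" if "q < p" for q
    using fun_cong[OF F_c, of q] that by (simp add: F_def)
  then show ?thesis
    by blast
qed

section \<open>Uniqueness of the digits theta\<close>

definition theta_exponent :: "nat \<Rightarrow> nat \<Rightarrow> (nat \<Rightarrow> nat \<Rightarrow> nat) \<Rightarrow> nat \<Rightarrow> complex" where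
  "theta_exponent p m \<theta> q = (\<Sum>j\<in>{1..m}. (2 * pi * \<i> / of_nat (p ^ j)) *
                               (\<Sum>a<p. of_nat (\<theta> j a) * of_nat (q ^ a)))"

definition theta_digits :: "nat \<Rightarrow> nat \<Rightarrow> (nat \<Rightarrow> nat \<Rightarrow> nat) \<Rightarrow> bool" where
  "theta_digits p m \<theta> \<longleftrightarrow>
     (\<forall>j a. \<theta> j a < p) \<and> (\<forall>j a. (j \<notin> {1..m} \<or> a \<ge> p) \<longrightarrow> \<theta> j a = 0)"

definition theta_numerator :: "nat \<Rightarrow> nat \<Rightarrow> (nat \<Rightarrow> nat \<Rightarrow> nat) \<Rightarrow> nat \<Rightarrow> int" where
  "theta_numerator p m \<theta> q = (\<Sum>j\<in>{1..m}. int p ^ (m - j) * polyval p (\<lambda>a. int (\<theta> j a)) (int q))"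

lemma exp_theta_exponent:
  assumes "p > 0"
  shows "exp (theta_exponent p m \<theta> q) = e2pi (of_int (theta_numerator p m \<theta> q) / of_int (int p ^ m))"
proof -
  have "(2 * pi * \<i> / of_nat (p ^ j)) * (\<Sum>a<p. of_nat (\<theta> j a) * of_nat (q ^ a)) =
      2 * pi * \<i> * (of_int (int p ^ (m - j) * polyval p (\<lambda>a. int (\<theta> j a)) (int q)) / of_nat (p ^ m))"
    if "j \<in> {1..m}" for j
  proof -
    have "(of_nat (p ^ m) :: complex) = of_nat (p ^ (m - j)) * of_nat (p ^ j)"
      using that by (simp flip: power_add)
    moreover have "(\<Sum>a<p. of_nat (\<theta> j a) * of_nat (q ^ a)) =
        (of_int (polyval p (\<lambda>a. int (\<theta> j a)) (int q)) :: complex)"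
      by (simp add: polyval_def)
    ultimately show ?thesis
      using assms by (simp add: field_simps)
  qed
  then have "theta_exponent p m \<theta> q =
      (\<Sum>j\<in>{1..m}. 2 * pi * \<i> * (of_int (int p ^ (m - j) * polyval p (\<lambda>a. int (\<theta> j a)) (int q))
        / of_nat (p ^ m)))"
    unfolding theta_exponent_def by (rule sum.cong[OF refl])
  also have "\<dots> = 2 * pi * \<i> * (of_int (theta_numerator p m \<theta> q) / of_nat (p ^ m))"
    by (simp add: theta_numerator_def sum_distrib_left sum_divide_distrib)
  finally show ?thesis
    by (simp add: e2pi_def)
qed

lemma theta_numerator_diff:
  "theta_numerator p m \<theta> q - theta_numerator p m \<theta>' q =
     (\<Sum>i<m. int p ^ i * polyval p (\<lambda>a. int (\<theta> (m - i) a) - int (\<theta>' (m - i) a)) (int q))"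
proof -
  have "theta_numerator p m \<theta> q - theta_numerator p m \<theta>' q =
      (\<Sum>j\<in>{1..m}. int p ^ (m - j) * polyval p (\<lambda>a. int (\<theta> j a) - int (\<theta>' j a)) (int q))"
    by (simp add: theta_numerator_def polyval_diff right_diff_distrib sum_subtractf)
  also have "\<dots> = (\<Sum>i<m. int p ^ i * polyval p (\<lambda>a. int (\<theta> (m - i) a) - int (\<theta>' (m - i) a)) (int q))"
    by (rule sum.reindex_bij_witness[of _ "\<lambda>i. m - i" "\<lambda>j. m - j"]) auto
  finally show ?thesis .
qed

lemma int_dvd_abs_less_imp_0:
  fixes x :: int
  assumes "d dvd x" and "\<bar>x\<bar> < \<bar>d\<bar>"
  shows "x = 0"
proof (rule ccontr)
  assume "x \<noteq> 0"
  then have "\<bar>d\<bar> \<le> \<bar>x\<bar>"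
    using assms(1) by (rule dvd_imp_le_int)
  with assms(2) show False
    by simp
qed

lemma polyval_digits_eq_0:
  assumes "prime p"
    and "\<forall>q<p. int p ^ m dvd (\<Sum>i<m. int p ^ i * polyval p (E i) (int q))"
    and "\<forall>i<m. \<forall>a<p. \<bar>E i a\<bar> < int p" and "i < m" and "a < p"
  shows "E i a = 0"
  using assms(2-)
proof (induction m arbitrary: E i a)
  case (Suc m)
  have split: "(\<Sum>i<Suc m. int p ^ i * polyval p (E i) x) =
      polyval p (E 0) x + int p * (\<Sum>i<m. int p ^ i * polyval p (E (Suc i)) x)" for x
    by (subst sum.lessThan_Suc_shift) (simp add: sum_distrib_left mult_ac)
  have E0_dvd: "int p dvd polyval p (E 0) (int q)" if "q < p" for q
  proof -
    have "int p dvd int p ^ Suc m"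
      by simp
    then have "int p dvd polyval p (E 0) (int q) + int p * (\<Sum>i<m. int p ^ i * polyval p (E (Suc i)) (int q))"
      using Suc.prems(1) that split by (metis dvd_trans)
    then show ?thesis
      by (simp add: dvd_add_left_iff)
  qed
  have E0: "E 0 a = 0" if "a < p" for a
  proof (rule int_dvd_abs_less_imp_0)
    show "int p dvd E 0 a"
      by (rule prime_dvd_coeff_if_polyval_vanishes[OF assms(1) _ that]) (simp add: E0_dvd)
    show "\<bar>E 0 a\<bar> < \<bar>int p\<bar>"
      using Suc.prems(2) that by simp
  qed
  have "int p ^ m dvd (\<Sum>i<m. int p ^ i * polyval p (E (Suc i)) (int q))" if "q < p" for q
  proof -
    have "polyval p (E 0) x = 0" for x
      using E0 by (simp add: polyval_def)
    moreover have "int p ^ Suc m dvd (\<Sum>i<Suc m. int p ^ i * polyval p (E i) (int q))"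
      using Suc.prems(1) that by blast
    ultimately have "int p * int p ^ m dvd int p * (\<Sum>i<m. int p ^ i * polyval p (E (Suc i)) (int q))"
      by (simp only: split add_0 power_Suc)
    then show ?thesis
      using assms(1) prime_gt_0_nat by simp
  qed
  then have "E (Suc i) a = 0" if "i < m" "a < p" for i a
    using Suc.IH[of "\<lambda>i. E (Suc i)"] Suc.prems(2) that by auto
  with E0 Suc.prems(3,4) show ?case
    by (cases i) auto
qed simp

lemma theta_digits_unique:
  assumes "prime p" and "theta_digits p m \<theta>" and "theta_digits p m \<theta>'"
    and "\<forall>q<p. exp (theta_exponent p m \<theta> q) = exp (theta_exponent p m \<theta>' q)"
  shows "\<theta> = \<theta>'"
proof -
  have p_pos: "p > 0"
    using assms(1) prime_gt_0_nat by blast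
  have dvd: "int p ^ m dvd (\<Sum>i<m. int p ^ i * polyval p (\<lambda>a. int (\<theta> (m - i) a) - int (\<theta>' (m - i) a)) (int q))"
    if "q < p" for q
  proof -
    have "e2pi (of_int (theta_numerator p m \<theta> q) / of_int (int p ^ m)) =
        e2pi (of_int (theta_numerator p m \<theta>' q) / of_int (int p ^ m))"
      using assms(4) that by (simp add: exp_theta_exponent[OF p_pos])
    then have "int p ^ m dvd theta_numerator p m \<theta> q - theta_numerator p m \<theta>' q"
      using e2pi_frac_eq_iff[of "int p ^ m"] p_pos by simp
    then show ?thesis
      by (simp add: theta_numerator_diff)
  qed
  have bounds: "\<forall>i<m. \<forall>a<p. \<bar>int (\<theta> (m - i) a) - int (\<theta>' (m - i) a)\<bar> < int p"
  proof -
    have "\<bar>int x - int y\<bar> < int p" if "x < p" "y < p" for x y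
      using that by linarith
    then show ?thesis
      using assms(2,3) by (simp add: theta_digits_def)
  qed
  have "\<theta> j a = \<theta>' j a" if "j \<in> {1..m}" "a < p" for j a
  proof -
    have "m - (m - j) = j"
      using that(1) by simp
    then show ?thesis
      using polyval_digits_eq_0[OF assms(1), of m "\<lambda>i a. int (\<theta> (m - i) a) - int (\<theta>' (m - i) a)" "m - j" a]
        that dvd bounds by auto
  qed
  then show ?thesis
    using assms(2,3) unfolding theta_digits_def
    by (intro ext) (metis not_less)
qed

lemma theta_eqI:
  assumes "prime p" and "theta_digits p m \<theta>" and "\<forall>q<p. \<xi> q = exp (theta_exponent p m \<theta> q)"
  shows "theta p m \<xi> = \<theta>"
proof -
  have "theta p m \<xi> = (THE \<theta>. theta_digits p m \<theta> \<and> (\<forall>q<p. \<xi> q = exp (theta_exponent p m \<theta> q)))"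
    by (simp add: theta_def theta_digits_def theta_exponent_def conj_assoc)
  also have "\<dots> = \<theta>"
    using assms theta_digits_unique[OF assms(1)] by (intro the_equality) auto
  finally show ?thesis .
qed

definition chi :: "nat \<Rightarrow> nat \<Rightarrow> (nat \<Rightarrow> int) \<Rightarrow> int \<Rightarrow> int \<Rightarrow> complex" where
  "chi p n c t x = e2pi (of_int (int p * polyval n c x + t) / of_int (int p ^ 2))"

definition carry :: "nat \<Rightarrow> (nat \<Rightarrow> int) \<Rightarrow> int \<Rightarrow> nat \<Rightarrow> int" where
  "carry p c t a = (c a + (if a = 0 then t div int p else 0)) mod int p"

definition chi_theta :: "nat \<Rightarrow> (nat \<Rightarrow> int) \<Rightarrow> int \<Rightarrow> nat \<Rightarrow> nat \<Rightarrow> nat" where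
  "chi_theta p c t j a = (if j = 1 \<and> a < p then nat (c a) else if j = 2 \<and> a = 0 then nat t else 0)"

lemma chi_mult: "chi p n c t x * chi p n c' t' x = chi p n (\<lambda>a. c a + c' a) (t + t') x"
proof -
  have "of_int (int p * polyval n (\<lambda>a. c a + c' a) x + (t + t')) / of_int (int p ^ 2) =
      of_int (int p * polyval n c x + t) / of_int (int p ^ 2)
      + (of_int (int p * polyval n c' x + t') / of_int (int p ^ 2) :: real)"
    by (simp add: polyval_add algebra_simps add_divide_distrib [symmetric])
  then show ?thesis
    by (simp add: chi_def e2pi_add)
qed

lemma polyval_carry_mod:
  assumes "n > 0"
  shows "polyval n (carry p c t) x mod int p = (polyval n c x + t div int p) mod int p"
proof -
  define d where "d a = c a + (if a = 0 then t div int p else 0)" for a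
  have "polyval n (carry p c t) x mod int p = (\<Sum>a<n. carry p c t a * x ^ a mod int p) mod int p"
    unfolding polyval_def by (rule mod_sum_eq [symmetric])
  also have "\<dots> = (\<Sum>a<n. d a * x ^ a mod int p) mod int p"
    unfolding carry_def d_def by (simp only: mod_mult_left_eq)
  also have "\<dots> = polyval n d x mod int p"
    unfolding polyval_def by (rule mod_sum_eq)
  also have "polyval n d x = polyval n c x + (\<Sum>a<n. (if a = 0 then t div int p else 0) * x ^ a)"
    by (simp only: d_def polyval_def sum.distrib distrib_right)
  also have "(\<Sum>a<n. (if a = 0 then t div int p else 0) * x ^ a) = (\<Sum>a<n. if a = 0 then t div int p else 0)"
    by (rule sum.cong) auto
  also have "\<dots> = t div int p"
    using assms by simp
  finally show ?thesis .
qed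

lemma chi_carry:
  assumes "p > 0" and "n > 0"
  shows "chi p n (carry p c t) (t mod int p) x = chi p n c t x"
proof -
  obtain k where "polyval n (carry p c t) x - (polyval n c x + t div int p) = int p * k"
    using polyval_carry_mod[OF assms(2)] by (metis dvd_def mod_eq_dvd_iff)
  then have "(int p * polyval n (carry p c t) x + t mod int p) - (int p * polyval n c x + t)
      = int p ^ 2 * k"
    by (simp add: algebra_simps power2_eq_square minus_div_mult_eq_mod [symmetric])
  moreover have "int p ^ 2 > 0"
    using assms(1) by simp
  ultimately show ?thesis
    unfolding chi_def by (subst e2pi_frac_eq_iff) auto
qed

lemma polyval_2: "polyval 2 c x = c 0 + c 1 * x"
  by (simp add: polyval_def numeral_2_eq_2)

lemma theta_digits_chi_theta:
  assumes "\<forall>a. 0 \<le> c a \<and> c a < int p" and "0 \<le> t" and "t < int p" and "m < 2 \<longrightarrow> t = 0"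
    and "1 \<le> m"
  shows "theta_digits p m (chi_theta p c t)"
  using assms by (auto simp: theta_digits_def chi_theta_def nat_less_iff)

lemma exp_theta_exponent_chi_theta:
  assumes "\<forall>a. 0 \<le> c a" and "0 \<le> t" and "m < 2 \<longrightarrow> t = 0" and "1 \<le> m" and "p > 0"
  shows "exp (theta_exponent p m (chi_theta p c t) q) = chi p p c t (int q)"
proof -
  define A :: complex where "A = of_int (polyval p c (int q))"
  define B :: complex where "B = of_int t"
  have inner: "(\<Sum>a<p. of_nat (chi_theta p c t j a) * of_nat (q ^ a)) =
      (if j = 1 then A else 0) + (if j = 2 then B else 0)" for j
  proof -
    have "(\<Sum>a<p. of_nat (chi_theta p c t j a) * of_nat (q ^ a) :: complex) =
        (\<Sum>a<p. (if j = 1 then of_int (c a * int q ^ a) else 0) + (if j = 2 \<and> a = 0 then B else 0))"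
      using assms(1,2) by (intro sum.cong) (auto simp: chi_theta_def B_def)
    then show ?thesis
      using assms(5) by (simp add: sum.distrib A_def polyval_def)
  qed
  have "theta_exponent p m (chi_theta p c t) q =
      (\<Sum>j\<in>{1..m}. (if j = 1 then 2 * pi * \<i> / of_nat p * A else 0)
                    + (if j = 2 then 2 * pi * \<i> / of_nat (p ^ 2) * B else 0))"
    unfolding theta_exponent_def inner by (intro sum.cong) (auto simp: distrib_left)
  also have "\<dots> = 2 * pi * \<i> / of_nat p * A + 2 * pi * \<i> / of_nat (p ^ 2) * B"
    using assms(3,4) by (simp add: sum.distrib B_def)
  also have "\<dots> = 2 * pi * \<i> * of_real (of_int (int p * polyval p c (int q) + t) / of_int (int p ^ 2))"
    using assms(5) by (simp add: A_def B_def field_simps power2_eq_square)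
  finally show ?thesis
    by (simp add: chi_def e2pi_def)
qed

lemma theta_eq_chi_theta:
  assumes "prime p" and "1 \<le> m" and "\<forall>a. 0 \<le> c a \<and> c a < int p"
    and "0 \<le> t" and "t < int p" and "m < 2 \<longrightarrow> t = 0"
    and "\<forall>q<p. \<xi> q = chi p p c t (int q)"
  shows "theta p m \<xi> = chi_theta p c t"
  using assms prime_gt_0_nat[OF assms(1)]
  by (intro theta_eqI theta_digits_chi_theta) (simp_all add: exp_theta_exponent_chi_theta)

lemma Rfun_chi_theta:
  assumes "theta p m \<xi> = chi_theta p c t" and "1 < p" and "0 \<le> c 0" and "0 \<le> c 1" and "0 \<le> t"
  shows "Rfun p m \<xi> q = chi p 2 c t (int q)"
proof -
  have "Rfun p m \<xi> q =
      omega p ^ (nat (c 0) + nat (c 1) * q) * exp (2 * pi * \<i> * of_int t / of_nat (p ^ 2))"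
    using assms by (simp add: Rfun_def chi_theta_def)
  also have "omega p ^ (nat (c 0) + nat (c 1) * q) = e2pi (of_int (c 0 + c 1 * int q) / real p)"
    using assms(3,4) by (simp add: omega_eq_e2pi e2pi_power)
  also have "exp (2 * pi * \<i> * of_int t / of_nat (p ^ 2)) = e2pi (of_int t / real p ^ 2)"
    by (simp add: e2pi_def)
  also have "e2pi (of_int (c 0 + c 1 * int q) / real p) * e2pi (of_int t / real p ^ 2) =
      chi p 2 c t (int q)"
    using assms(2)
    by (simp add: chi_def polyval_2 flip: e2pi_add) (simp add: field_simps power2_eq_square)
  finally show ?thesis .
qed

lemma Rfun_chi:
  assumes "prime p" and "1 \<le> m" and "m < 2 \<longrightarrow> t = 0"
    and "\<forall>q<p. \<xi> q = chi p p c t (int q)"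
  shows "Rfun p m \<xi> q = chi p 2 c t (int q)"
proof -
  have p: "1 < p"
    using assms(1) prime_gt_1_nat by blast
  \<comment> \<open>theta sees only the reduced digits, but chi p 2 is as insensitive to the reduction as chi p p\<close>
  have "\<forall>q<p. \<xi> q = chi p p (carry p c t) (t mod int p) (int q)"
    using assms(4) p by (simp add: chi_carry)
  moreover have "\<forall>a. 0 \<le> carry p c t a \<and> carry p c t a < int p"
    using p by (simp add: carry_def)
  ultimately have "theta p m \<xi> = chi_theta p (carry p c t) (t mod int p)"
    using p assms(1-3) by (intro theta_eq_chi_theta) auto
  then have "Rfun p m \<xi> q = chi p 2 (carry p c t) (t mod int p) (int q)"
    using p by (intro Rfun_chi_theta) (simp_all add: carry_def)
  also have "\<dots> = chi p 2 c t (int q)"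
    using p by (simp add: chi_carry)
  finally show ?thesis .
qed

section \<open>Diagonal elements with central p-th power\<close>

lemma roots_of_unity_numerators:
  assumes "n > 0" and "\<forall>q<p. \<xi> q ^ n = 1"
  obtains N :: "nat \<Rightarrow> int" where "\<And>q. q < p \<Longrightarrow> \<xi> q = e2pi (of_int (N q) / of_int (int n))"
proof -
  have "\<exists>j::nat. \<xi> q = e2pi (of_nat j / of_nat n)" if "q < p" for q
    using root_of_unity_e2pi[of n "\<xi> q"] assms that by simp
  then obtain J where "\<forall>q<p. \<xi> q = e2pi (of_nat (J q) / of_nat n)"
    by metis
  then show ?thesis
    using that[of "\<lambda>q. int (J q)"] by simp
qed

lemma two_level_numerators:
  fixes N :: "nat \<Rightarrow> int"
  assumes "p > 0" and "2 \<le> m"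
    and "\<forall>q<p. int p ^ (m - 1) dvd N q - N 0" and "int p ^ m dvd (\<Sum>q<p. N q)"
  obtains g h where "\<And>q. q < p \<Longrightarrow> N q = int p ^ (m - 2) * (int p * g q + h)"
proof -
  define P where "P = int p"
  have P_pow: "P ^ m = P * P ^ (m - 1)" "P ^ (m - 1) = P * P ^ (m - 2)"
  proof -
    have m: "m = (m - 2) + 2"
      using assms(2) by simp
    show "P ^ m = P * P ^ (m - 1)" "P ^ (m - 1) = P * P ^ (m - 2)"
      by (subst (1 2) m; simp add: power_add)+
  qed
  define g where "g q = (N q - N 0) div P ^ (m - 1)" for q
  have N_eq: "N q = N 0 + P ^ (m - 1) * g q" if "q < p" for q
    using assms(3) that by (simp add: g_def P_def)
  have "(\<Sum>q<p. N q) = (\<Sum>q<p. N 0 + P ^ (m - 1) * g q)"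
    by (intro sum.cong refl N_eq) simp
  also have "\<dots> = P * N 0 + P ^ (m - 1) * (\<Sum>q<p. g q)"
    by (simp add: sum.distrib sum_distrib_left P_def)
  finally have "P ^ (m - 1) dvd P * N 0 + P ^ (m - 1) * (\<Sum>q<p. g q)"
    using assms(4) P_pow(1) by (metis P_def dvd_mult_right)
  then have "P * P ^ (m - 2) dvd P * N 0"
    using P_pow(2) by (simp add: dvd_add_left_iff)
  then obtain h where h: "N 0 = P ^ (m - 2) * h"
    using assms(1) by (auto simp: P_def elim: dvdE)
  have "N q = P ^ (m - 2) * (P * g q + h)" if "q < p" for q
    using N_eq[OF that] h P_pow(2) by (simp add: algebra_simps)
  then show ?thesis
    using that by (simp add: P_def)
qed

lemma root_numerators_dvd:
  fixes N :: "nat \<Rightarrow> int"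
  assumes "p > 0" and "1 \<le> m" and N: "\<And>q. q < p \<Longrightarrow> \<xi> q = e2pi (of_int (N q) / of_int (int p ^ m))"
    and "\<forall>q<p. \<xi> q ^ p = \<xi> 0 ^ p" and "(\<Prod>q<p. \<xi> q) = 1"
  shows "\<forall>q<p. int p ^ (m - 1) dvd N q - N 0" and "int p ^ m dvd (\<Sum>q<p. N q)"
proof -
  have "int p ^ m dvd int p * N q - int p * N 0" if "q < p" for q
  proof -
    have "e2pi (of_int (int p * N q) / of_int (int p ^ m)) = \<xi> q ^ p"
      using N[OF that] by (simp add: e2pi_power)
    also have "\<dots> = \<xi> 0 ^ p"
      using assms(4) that by blast
    also have "\<dots> = e2pi (of_int (int p * N 0) / of_int (int p ^ m))"
      using N[of 0] assms(1) by (simp add: e2pi_power)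
    finally show ?thesis
      using assms(1) by (subst (asm) e2pi_frac_eq_iff) auto
  qed
  moreover have "int p ^ m = int p * int p ^ (m - 1)"
    using assms(2) by (cases m) simp_all
  ultimately show "\<forall>q<p. int p ^ (m - 1) dvd N q - N 0"
    using assms(1) by (simp add: right_diff_distrib [symmetric])
  have "e2pi (of_int (\<Sum>q<p. N q) / of_int (int p ^ m)) =
      (\<Prod>q<p. e2pi (of_int (N q) / of_int (int p ^ m)))"
    by (simp add: prod_e2pi sum_divide_distrib)
  also have "\<dots> = e2pi (of_int 0 / of_int (int p ^ m))"
    using N assms(5) by (simp add: e2pi_def)
  finally show "int p ^ m dvd (\<Sum>q<p. N q)"
    using assms(1) by (subst (asm) e2pi_frac_eq_iff) auto
qed

lemma exists_two_level_exponents: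
  assumes "prime p" and "1 \<le> m" and "\<forall>q<p. \<xi> q ^ p ^ m = 1" and "\<forall>q<p. \<xi> q ^ p = \<xi> 0 ^ p"
    and "(\<Prod>q<p. \<xi> q) = 1"
  shows "\<exists>g h. (m < 2 \<longrightarrow> h = 0) \<and>
    (\<forall>q<p. \<xi> q = e2pi (of_int (int p * g q + h) / of_int (int p ^ 2)))"
proof -
  have p: "p > 0"
    using assms(1) prime_gt_0_nat by blast
  obtain N where N: "\<And>q. q < p \<Longrightarrow> \<xi> q = e2pi (of_int (N q) / of_int (int p ^ m))"
    using roots_of_unity_numerators[of "p ^ m" p \<xi>] assms(3) p by auto
  show ?thesis
  proof (cases "m = 1")
    case True
    have "\<xi> q = e2pi (of_int (int p * N q + 0) / of_int (int p ^ 2))" if "q < p" for q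
      using N[OF that] True p by (simp add: power2_eq_square)
    then show ?thesis
      using True by blast
  next
    case False
    obtain g h where gh: "\<And>q. q < p \<Longrightarrow> N q = int p ^ (m - 2) * (int p * g q + h)"
      using two_level_numerators[of p m N] root_numerators_dvd[OF p assms(2) N assms(4,5)]
        False assms(2) p by auto
    have "m = (m - 2) + 2"
      using False assms(2) by simp
    then have "int p ^ m = int p ^ (m - 2) * int p ^ 2"
      by (metis power_add)
    then have "\<xi> q = e2pi (of_int (int p * g q + h) / of_int (int p ^ 2))" if "q < p" for q
      using N[OF that] gh[OF that] p by simp
    then show ?thesis
      using False assms(2) by (intro exI[of _ g] exI[of _ h]) auto
  qed
qed

lemma exists_chi_form:
  assumes "prime p" and "1 \<le> m" and "\<forall>q<p. \<xi> q ^ p ^ m = 1" and "\<forall>q<p. \<xi> q ^ p = \<xi> 0 ^ p"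
    and "(\<Prod>q<p. \<xi> q) = 1"
  shows "\<exists>c t. (m < 2 \<longrightarrow> t = 0) \<and> (\<forall>q<p. \<xi> q = chi p p c t (int q))"
proof -
  obtain g h where h: "m < 2 \<longrightarrow> h = 0"
    and g: "\<forall>q<p. \<xi> q = e2pi (of_int (int p * g q + h) / of_int (int p ^ 2))"
    using exists_two_level_exponents[OF assms] by blast
  obtain c where c: "\<forall>q<p. polyval p c (int q) mod int p = g q mod int p"
    using polyval_interpolation[OF assms(1)] by blast
  have "chi p p c h (int q) = \<xi> q" if "q < p" for q
  proof -
    have "int p dvd polyval p c (int q) - g q"
      using c that by (simp add: mod_eq_dvd_iff)
    then have "int p ^ 2 dvd (int p * polyval p c (int q) + h) - (int p * g q + h)"
      by (simp add: power2_eq_square flip: right_diff_distrib)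
    moreover have "int p ^ 2 > 0"
      using assms(1) prime_gt_0_nat by simp
    ultimately have "chi p p c h (int q) = e2pi (of_int (int p * g q + h) / of_int (int p ^ 2))"
      unfolding chi_def by (subst e2pi_frac_eq_iff) auto
    then show ?thesis
      using g that by simp
  qed
  then show ?thesis
    using h by metis
qed

lemma Tpow_center_chi_form:
  assumes "prime p" and "1 \<le> m" and "Sm p \<xi> \<in> Tpow p m"
    and "Sm p \<xi> ^\<^sub>m p \<in> center (Kgrp p (Tpow p m))"
  shows "\<exists>c t. (m < 2 \<longrightarrow> t = 0) \<and> (\<forall>q<p. \<xi> q = chi p p c t (int q))"
proof (rule exists_chi_form[OF assms(1,2)])
  show "\<forall>q<p. \<xi> q ^ p ^ m = 1" and "(\<Prod>q<p. \<xi> q) = 1"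
    using assms(3) by (rule Tpow_SmD)+
  show "\<forall>q<p. \<xi> q ^ p = \<xi> 0 ^ p"
    using prime_gt_1_nat[OF assms(1)] assms(4) by (rule center_Sm_pow_const)
qed

theorem lemma5:
  fixes p m :: nat and \<xi> \<xi>' :: "nat \<Rightarrow> complex"
  assumes "prime p" and "odd p" and "m \<ge> 1"
    and "Sm p \<xi> \<in> Tpow p m" and "Sm p \<xi>' \<in> Tpow p m"
    and "Sm p \<xi> ^\<^sub>m p \<in> center (Kgrp p (Tpow p m))"
    and "Sm p \<xi>' ^\<^sub>m p \<in> center (Kgrp p (Tpow p m))"
  shows "phi1 p m (Sm p \<xi> * Sm p \<xi>') = phi1 p m (Sm p \<xi>) * phi1 p m (Sm p \<xi>')"
proof -
  obtain c t where t: "m < 2 \<longrightarrow> t = 0" and \<xi>: "\<forall>q<p. \<xi> q = chi p p c t (int q)"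
    using Tpow_center_chi_form[OF assms(1,3,4,6)] by blast
  obtain c' t' where t': "m < 2 \<longrightarrow> t' = 0" and \<xi>': "\<forall>q<p. \<xi>' q = chi p p c' t' (int q)"
    using Tpow_center_chi_form[OF assms(1,3,5,7)] by blast
  have p: "p > 0"
    using assms(1) prime_gt_0_nat by blast
  have \<xi>\<xi>': "\<forall>q<p. \<xi> q * \<xi>' q = chi p p (\<lambda>a. c a + c' a) (t + t') (int q)"
    using \<xi> \<xi>' by (simp add: chi_mult)
  have nonzero: "\<xi> 0 \<noteq> 0" "\<xi>' 0 \<noteq> 0"
    using \<xi> \<xi>' p by (simp_all add: chi_def e2pi_def)
  have "Rfun p m (\<lambda>q. \<xi> q * \<xi>' q) = (\<lambda>q. Rfun p m \<xi> q * Rfun p m \<xi>' q)"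
    using Rfun_chi[OF assms(1,3) _ \<xi>\<xi>'] Rfun_chi[OF assms(1,3) t \<xi>] Rfun_chi[OF assms(1,3) t' \<xi>'] t t'
    by (simp add: chi_mult fun_eq_iff)
  then show ?thesis
    using p nonzero by (simp add: Sm_mult phi1_Sm)
qed

end
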